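(* Let $n\ge3$ and let $G$ be a spanning subgraph of $CT_n$ containing no cycle of length $6$. Then for every edge $e$ of $CT_n$ there are at most two $4$-cycles $H$ of $CT_n$ with $e\in E(H)$ such that the three edges of $H$ other than $e$ all belong to $G$.
   Context: $CT_n$ is the graph with vertex set the symmetric group $\mathrm{S}_n$ on $\{1,\dots,n\}$ in which $\{x,y\}$ is an edge iff $yx^{-1}$ is a transposition. *)

theory Defs
  imports "HOL-Combinatorics.Combinatorics"
begin

definition CT_verts :: "nat \<Rightarrow> (nat \<Rightarrow> nat) set" where
  "CT_verts n = {p. p permutes {1..n}}"

definition CT_adj :: "nat \<Rightarrow> (nat \<Rightarrow> nat) \<Rightarrow> (nat \<Rightarrow> nat) \<Rightarrow> bool" where
  "CT_adj n x y \<longleftrightarrow> x \<in> CT_verts n \<and> y \<in> CT_verts n \<and>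
     (\<exists>a\<in>{1..n}. \<exists>b\<in>{1..n}. a \<noteq> b \<and> y \<circ> inv x = transpose a b)"

definition CT_edges :: "nat \<Rightarrow> (nat \<Rightarrow> nat) set set" where
  "CT_edges n = {{x, y} | x y. CT_adj n x y}"

definition cycles_of_length :: "'a set set \<Rightarrow> nat \<Rightarrow> 'a set set set" where
  "cycles_of_length E k =
     {(\<lambda>i. {vs ! i, vs ! ((i + 1) mod k)}) ` {..<k} | vs.
        length vs = k \<and> distinct vs \<and> (\<forall>i<k. {vs ! i, vs ! ((i + 1) mod k)} \<in> E)}"

end

theory Submission
  imports Defs
begin

text \<open>Adjacent vertices of \<open>CT\<^sub>n\<close> have opposite parity, so \<open>CT\<^sub>n\<close> has no triangles.
  Two distinct vertices \<open>p\<close>, \<open>q\<close> have at most three common neighbours \<open>w\<close>, because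
  \<open>w \<mapsto> w p\<^sup>-\<^sup>1\<close> maps them injectively to the transpositions \<open>s\<close> with \<open>s p q\<^sup>-\<^sup>1\<close> a transposition,
  and a non-identity permutation is a product of two transpositions in at most three ways.

  A 4-cycle through the edge \<open>{x, y}\<close> whose other edges lie in \<open>G\<close> is a path \<open>x u v y\<close> in \<open>G\<close>.
  Two such paths with different \<open>u\<close> and different \<open>v\<close> would close up to a 6-cycle in \<open>G\<close>
  (its vertices are distinct since there are no triangles). Hence among three such paths all share
  \<open>u\<close> or all share \<open>v\<close>; in the first case \<open>u\<close> and \<open>y\<close> have the four common neighbours
  \<open>x, v\<^sub>1, v\<^sub>2, v\<^sub>3\<close>, and symmetrically in the second.\<close>

definition transposition :: "('a \<Rightarrow> 'a) \<Rightarrow> bool" where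
  "transposition s \<longleftrightarrow> (\<exists>a b. a \<noteq> b \<and> s = transpose a b)"

definition transposition_factors :: "('a \<Rightarrow> 'a) \<Rightarrow> ('a \<Rightarrow> 'a) set" where
  "transposition_factors \<tau> = {s. transposition s \<and> transposition (s \<circ> \<tau>)}"

lemma transpose_comp_eq_iff: "transpose a b \<circ> f = g \<longleftrightarrow> f = transpose a b \<circ> g"
  by (auto simp flip: comp_assoc)

lemma transpose_comp_transpose_moved:
  assumes "a \<noteq> b" "transpose a b \<circ> transpose c d \<noteq> id"
  obtains z where "(transpose a b \<circ> transpose c d) z \<noteq> z"
    "transpose a b = transpose z ((transpose a b \<circ> transpose c d) z)"
proof (cases "a \<in> {c, d}")
  case a: True
  show ?thesis
  proof (cases "b \<in> {c, d}")
    case True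
    with a assms have "transpose c d = transpose a b"
      by (auto simp: transpose_commute)
    with assms(2) show ?thesis by simp
  next
    case False
    with assms(1) show ?thesis by (intro that[of b]) (auto simp: transpose_commute)
  qed
next
  case False
  with assms(1) show ?thesis by (intro that[of a]) auto
qed

lemma transposition_factors_subset:
  assumes "a \<noteq> b" "\<tau> = transpose a b \<circ> transpose c d" "\<tau> \<noteq> id"
  shows "transposition_factors \<tau> \<subseteq> (\<lambda>z. transpose z (\<tau> z)) ` {a, b, c, d}"
proof
  fix s assume "s \<in> transposition_factors \<tau>"
  then obtain a' b' c' d' where "a' \<noteq> b'" "s = transpose a' b'" "s \<circ> \<tau> = transpose c' d'"
    unfolding transposition_factors_def transposition_def by blast
  then have "\<tau> = transpose a' b' \<circ> transpose c' d'" "s = transpose a' b'"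
    by (simp_all add: transpose_comp_eq_iff)
  then obtain z where "\<tau> z \<noteq> z" "s = transpose z (\<tau> z)"
    using transpose_comp_transpose_moved[OF \<open>a' \<noteq> b'\<close>] assms(3) by metis
  moreover from \<open>\<tau> z \<noteq> z\<close> assms(2) have "z \<in> {a, b, c, d}"
    by (auto split: if_splits simp: transpose_def)
  ultimately show "s \<in> (\<lambda>z. transpose z (\<tau> z)) ` {a, b, c, d}" by blast
qed

lemma card_image_transpose_moved_le:
  assumes "a \<noteq> b" "\<tau> = transpose a b \<circ> transpose c d"
  shows "card ((\<lambda>z. transpose z (\<tau> z)) ` {a, b, c, d}) \<le> 3"
    (is "card (?f ` _) \<le> 3")
proof (cases "{a, b} \<inter> {c, d} = {}")
  case True
  with assms have "?f a = ?f b" by (auto simp: transpose_commute)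
  then have "card (?f ` {a, b, c, d}) = card (?f ` {b, c, d})" by simp
  also have "\<dots> \<le> card {b, c, d}" by (rule card_image_le) simp
  also have "\<dots> \<le> 3" by (simp add: card_insert_if)
  finally show ?thesis .
next
  case False
  then have "{a, b, c, d} = {a, c, d} \<or> {a, b, c, d} = {b, c, d}" by auto
  then have "card {a, b, c, d} \<le> 3" by (auto simp: card_insert_if)
  then show ?thesis using card_image_le[of "{a, b, c, d}" ?f] by simp
qed

lemma transposition_factors_finite_card:
  assumes "\<tau> \<noteq> id"
  shows "finite (transposition_factors \<tau>)" "card (transposition_factors \<tau>) \<le> 3"
proof -
  have "finite (transposition_factors \<tau>) \<and> card (transposition_factors \<tau>) \<le> 3"
  proof (cases "transposition_factors \<tau> = {}")
    case False
    then obtain a b c d where "a \<noteq> b" "transpose a b \<circ> \<tau> = transpose c d"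
      unfolding transposition_factors_def transposition_def by blast
    then have ab: "a \<noteq> b" "\<tau> = transpose a b \<circ> transpose c d"
      by (simp_all add: transpose_comp_eq_iff)
    have "card (transposition_factors \<tau>) \<le> card ((\<lambda>z. transpose z (\<tau> z)) ` {a, b, c, d})"
      by (rule card_mono[OF _ transposition_factors_subset[OF ab assms]]) simp
    with card_image_transpose_moved_le[OF ab] finite_subset[OF transposition_factors_subset[OF ab assms]]
    show ?thesis by simp
  qed simp
  then show "finite (transposition_factors \<tau>)" "card (transposition_factors \<tau>) \<le> 3" by simp_all
qed

lemma finite_CT_verts: "finite (CT_verts n)"
  unfolding CT_verts_def by (simp add: finite_permutations)

lemma CT_vert_inv: "p \<in> CT_verts n \<Longrightarrow> inv p \<circ> p = id \<and> p \<circ> inv p = id"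
  unfolding CT_verts_def using permutes_inv_o by blast

lemma CT_adjE:
  assumes "CT_adj n x y"
  obtains a b where "a \<in> {1..n}" "b \<in> {1..n}" "a \<noteq> b" "y = transpose a b \<circ> x"
    "x \<in> CT_verts n" "y \<in> CT_verts n"
proof -
  from assms obtain a b where ab: "a \<in> {1..n}" "b \<in> {1..n}" "a \<noteq> b" "y \<circ> inv x = transpose a b"
    and v: "x \<in> CT_verts n" "y \<in> CT_verts n" unfolding CT_adj_def by blast
  from ab(4) have "y = transpose a b \<circ> x"
    by (metis CT_vert_inv[OF v(1)] comp_assoc comp_id)
  with ab v that show ?thesis by blast
qed

lemma CT_adj_sym: "CT_adj n x y \<Longrightarrow> CT_adj n y x"
proof (elim CT_adjE)
  fix a b assume ab: "a \<in> {1..n}" "b \<in> {1..n}" "a \<noteq> b" "y = transpose a b \<circ> x"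
    and v: "x \<in> CT_verts n" "y \<in> CT_verts n"
  from ab(4) have "x = transpose a b \<circ> y"
    using transpose_comp_eq_iff[of a b x y] by simp
  then have "x \<circ> inv y = transpose a b \<circ> (y \<circ> inv y)"
    by (simp add: comp_assoc)
  then have "x \<circ> inv y = transpose a b"
    using CT_vert_inv[OF v(2)] by simp
  with ab v show "CT_adj n y x"
    unfolding CT_adj_def by blast
qed

lemma CT_adj_evenperm: "CT_adj n x y \<Longrightarrow> evenperm y \<longleftrightarrow> \<not> evenperm x"
proof (elim CT_adjE)
  fix a b assume "a \<noteq> b" "y = transpose a b \<circ> x" "x \<in> CT_verts n"
  moreover from \<open>x \<in> CT_verts n\<close> have "permutation x"
    unfolding CT_verts_def permutation_permutes by blast
  ultimately show "evenperm y \<longleftrightarrow> \<not> evenperm x"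
    by (simp add: evenperm_comp evenperm_swap permutation_swap_id)
qed

lemma CT_no_triangle: "CT_adj n x y \<Longrightarrow> CT_adj n y z \<Longrightarrow> \<not> CT_adj n x z"
  using CT_adj_evenperm by blast

lemma doubleton_in_CT_edges_iff: "{x, y} \<in> CT_edges n \<longleftrightarrow> CT_adj n x y"
  unfolding CT_edges_def by (auto simp: doubleton_eq_iff dest: CT_adj_sym)

lemma card_CT_common_neighbours_le:
  assumes "p \<noteq> q"
  shows "card {w. CT_adj n p w \<and> CT_adj n q w} \<le> 3" (is "card ?C \<le> 3")
proof (cases "?C = {}")
  case False
  then have v: "p \<in> CT_verts n" "q \<in> CT_verts n" unfolding CT_adj_def by blast+
  let ?\<tau> = "p \<circ> inv q"
  have "?\<tau> \<noteq> id"
  proof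
    assume "?\<tau> = id"
    then have "p \<circ> (inv q \<circ> q) = q" by (simp flip: comp_assoc)
    with CT_vert_inv[OF v(2)] assms show False by simp
  qed
  have "inj_on (\<lambda>w. w \<circ> inv p) ?C"
  proof (rule inj_onI)
    fix w w' assume "w \<circ> inv p = w' \<circ> inv p"
    then have "w \<circ> (inv p \<circ> p) = w' \<circ> (inv p \<circ> p)" by (simp flip: comp_assoc)
    with CT_vert_inv[OF v(1)] show "w = w'" by simp
  qed
  moreover have "(\<lambda>w. w \<circ> inv p) ` ?C \<subseteq> transposition_factors ?\<tau>"
  proof clarify
    fix w assume "CT_adj n p w" "CT_adj n q w"
    then have "transposition (w \<circ> inv p)" "transposition (w \<circ> inv q)"
      unfolding CT_adj_def transposition_def by blast+
    moreover have "w \<circ> inv p \<circ> ?\<tau> = w \<circ> (inv p \<circ> p) \<circ> inv q" by (simp add: comp_assoc)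
    ultimately show "w \<circ> inv p \<in> transposition_factors ?\<tau>"
      using CT_vert_inv[OF v(1)] unfolding transposition_factors_def by simp
  qed
  ultimately have "card ?C \<le> card (transposition_factors ?\<tau>)"
    using transposition_factors_finite_card(1)[OF \<open>?\<tau> \<noteq> id\<close>] by (rule card_inj_on_le)
  also have "\<dots> \<le> 3" by (rule transposition_factors_finite_card(2)[OF \<open>?\<tau> \<noteq> id\<close>])
  finally show ?thesis .
qed (metis card.empty zero_le)

lemma finite_CT_neighbours: "finite {w. CT_adj n p w}"
  by (rule finite_subset[OF _ finite_CT_verts]) (auto simp: CT_adj_def)

lemma cycles_of_length_4E:
  assumes "H \<in> cycles_of_length E 4"
  obtains a b c d where "distinct [a, b, c, d]" "H = {{a, b}, {b, c}, {c, d}, {d, a}}"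
proof -
  obtain vs where vs: "H = (\<lambda>i. {vs ! i, vs ! ((i + 1) mod 4)}) ` {..<4}" "length vs = 4" "distinct vs"
    using assms unfolding cycles_of_length_def by blast
  from vs(2) obtain a b c d where abcd: "vs = [a, b, c, d]"
    by (auto simp: numeral_eq_Suc length_Suc_conv)
  have "{..<4::nat} = {0, 1, 2, 3}" by auto
  with vs abcd show ?thesis by (intro that) simp_all
qed

lemma cycle4_rotate: "{{a, b}, {b, c}, {c, d}, {d, a}} = {{b, c}, {c, d}, {d, a}, {a, b}}"
  by auto

lemma cycle4_through_first_edge:
  assumes "distinct [a, b, c, d]" "{x, y} = {a, b}"
  shows "\<exists>u v. distinct [x, u, v, y] \<and>
    {{a, b}, {b, c}, {c, d}, {d, a}} = {{x, y}, {x, u}, {u, v}, {v, y}}"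
proof -
  from assms(2) consider "x = a" "y = b" | "x = b" "y = a" by (auto simp: doubleton_eq_iff)
  then show ?thesis
  proof cases
    case 1
    with assms(1) show ?thesis by (intro exI[of _ d] exI[of _ c]) auto
  next
    case 2
    with assms(1) show ?thesis by (intro exI[of _ c] exI[of _ d]) auto
  qed
qed

lemma cycle4_through_edge:
  assumes "distinct [a, b, c, d]" "{x, y} \<in> {{a, b}, {b, c}, {c, d}, {d, a}}"
  shows "\<exists>u v. distinct [x, u, v, y] \<and>
    {{a, b}, {b, c}, {c, d}, {d, a}} = {{x, y}, {x, u}, {u, v}, {v, y}}"
proof -
  note rot = cycle4_rotate[of a b c d] cycle4_rotate[of b c d a] cycle4_rotate[of c d a b]
  from assms(2) consider "{x, y} = {a, b}" | "{x, y} = {b, c}" | "{x, y} = {c, d}"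
    | "{x, y} = {d, a}"
    by blast
  then show ?thesis
  proof cases
    case 1
    with assms(1) show ?thesis by (rule cycle4_through_first_edge)
  next
    case 2
    from assms(1) have "distinct [b, c, d, a]" by auto
    from cycle4_through_first_edge[OF this 2] show ?thesis unfolding rot(1) .
  next
    case 3
    from assms(1) have "distinct [c, d, a, b]" by auto
    from cycle4_through_first_edge[OF this 3] show ?thesis unfolding rot(1,2) .
  next
    case 4
    from assms(1) have "distinct [d, a, b, c]" by auto
    from cycle4_through_first_edge[OF this 4] show ?thesis unfolding rot .
  qed
qed

lemma cycles_of_length_6_nonempty:
  assumes "distinct [a, b, c, d, e, f]"
    and "{a, b} \<in> E" "{b, c} \<in> E" "{c, d} \<in> E" "{d, e} \<in> E" "{e, f} \<in> E" "{f, a} \<in> E"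
  shows "cycles_of_length E 6 \<noteq> {}"
proof -
  let ?vs = "[a, b, c, d, e, f]"
  have "\<forall>i<6. {?vs ! i, ?vs ! ((i + 1) mod 6)} \<in> E"
  proof (intro allI impI)
    fix i :: nat assume "i < 6"
    then have "i \<in> {0, 1, 2, 3, 4, 5}" by auto
    with assms(2-) show "{?vs ! i, ?vs ! ((i + 1) mod 6)} \<in> E" by auto
  qed
  then have "(\<lambda>i. {?vs ! i, ?vs ! ((i + 1) mod 6)}) ` {..<6} \<in> cycles_of_length E 6"
    using assms(1) unfolding cycles_of_length_def by (intro CollectI exI[of _ ?vs]) simp
  then show ?thesis by blast
qed

definition path3 :: "'a set set \<Rightarrow> 'a \<Rightarrow> 'a \<Rightarrow> 'a \<Rightarrow> 'a \<Rightarrow> bool" where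
  "path3 G x u v y \<longleftrightarrow> distinct [x, u, v, y] \<and> {x, u} \<in> G \<and> {u, v} \<in> G \<and> {v, y} \<in> G"

lemma path3_rev: "path3 G x u v y \<longleftrightarrow> path3 G y v u x"
  unfolding path3_def by (auto simp: insert_commute)

lemma path3_CT_adj:
  assumes "G \<subseteq> CT_edges n" "path3 G x u v y"
  shows "CT_adj n x u" "CT_adj n u v" "CT_adj n v y"
  using assms by (auto simp: path3_def simp flip: doubleton_in_CT_edges_iff)

lemma cycle4_through_edgeE:
  assumes "H \<in> cycles_of_length E 4" "{x, y} \<in> H" "H - {{x, y}} \<subseteq> G"
  obtains u v where "path3 G x u v y" "H = {{x, y}, {x, u}, {u, v}, {v, y}}"
proof -
  obtain a b c d where abcd: "distinct [a, b, c, d]" and H: "H = {{a, b}, {b, c}, {c, d}, {d, a}}"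
    using assms(1) by (rule cycles_of_length_4E)
  obtain u v where uv: "distinct [x, u, v, y]" "H = {{x, y}, {x, u}, {u, v}, {v, y}}"
    using cycle4_through_edge[OF abcd assms(2)[unfolded H]] unfolding H by blast
  moreover from uv(1) have "{x, u} \<noteq> {x, y}" "{u, v} \<noteq> {x, y}" "{v, y} \<noteq> {x, y}"
    by (auto simp: doubleton_eq_iff)
  ultimately have "{x, u} \<in> G" "{u, v} \<in> G" "{v, y} \<in> G"
    using assms(3) by blast+
  with uv show ?thesis by (intro that) (auto simp: path3_def)
qed

lemma path3_share_vertex:
  assumes G: "G \<subseteq> CT_edges n" and no6: "cycles_of_length G 6 = {}" and xy: "CT_adj n x y"
    and p: "path3 G x u v y" and p': "path3 G x u' v' y"
  shows "u = u' \<or> v = v'"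
proof (rule ccontr)
  assume ne: "\<not> (u = u' \<or> v = v')"
  have "CT_adj n x u" "CT_adj n v y" "CT_adj n x u'" "CT_adj n v' y"
    using path3_CT_adj[OF G p] path3_CT_adj[OF G p'] by simp_all
  with xy have "u \<noteq> v'" "v \<noteq> u'"
    using CT_no_triangle CT_adj_sym by metis+
  with p p' ne have "distinct [x, u, v, y, v', u']"
    unfolding path3_def by auto
  moreover have "{x, u} \<in> G" "{u, v} \<in> G" "{v, y} \<in> G"
    using p unfolding path3_def by simp_all
  moreover have "{y, v'} \<in> G" "{v', u'} \<in> G" "{u', x} \<in> G"
    using p' unfolding path3_def by (simp_all add: insert_commute)
  ultimately have "cycles_of_length G 6 \<noteq> {}"
    by (rule cycles_of_length_6_nonempty)
  with no6 show False by simp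
qed

lemma finite_path3_fixed_first:
  assumes "G \<subseteq> CT_edges n"
  shows "finite {v. path3 G x u v y}"
  using path3_CT_adj(2)[OF assms] by (intro finite_subset[OF _ finite_CT_neighbours[of n u]]) blast

lemma card_path3_fixed_first_le:
  assumes G: "G \<subseteq> CT_edges n" and xy: "CT_adj n x y"
  shows "card {v. path3 G x u v y} \<le> 2" (is "card ?V \<le> 2")
proof (cases "?V = {}")
  case False
  then obtain v0 where "path3 G x u v0 y" by blast
  then have "u \<noteq> y" "CT_adj n u x"
    using path3_CT_adj(1)[OF G] CT_adj_sym by (auto simp: path3_def)
  with xy path3_CT_adj(2,3)[OF G] have sub: "insert x ?V \<subseteq> {w. CT_adj n u w \<and> CT_adj n y w}"
    using CT_adj_sym by blast
  have "x \<notin> ?V" by (simp add: path3_def)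
  with finite_path3_fixed_first[OF G] have "card ?V + 1 = card (insert x ?V)" by simp
  also have "\<dots> \<le> card {w. CT_adj n u w \<and> CT_adj n y w}"
    by (rule card_mono[OF finite_subset[OF _ finite_CT_neighbours[of n u]] sub]) blast
  also have "\<dots> \<le> 3"
    by (rule card_CT_common_neighbours_le[OF \<open>u \<noteq> y\<close>])
  finally show ?thesis by simp
qed (metis card.empty zero_le)

lemma finite_path3:
  assumes "G \<subseteq> CT_edges n"
  shows "finite {(u, v). path3 G x u v y}"
proof (rule finite_subset)
  show "{(u, v). path3 G x u v y} \<subseteq> {w. CT_adj n x w} \<times> {w. CT_adj n y w}"
    using path3_CT_adj[OF assms] CT_adj_sym by blast
qed (simp add: finite_CT_neighbours)

lemma card_path3_le:
  assumes G: "G \<subseteq> CT_edges n" and no6: "cycles_of_length G 6 = {}" and xy: "CT_adj n x y"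
  shows "card {(u, v). path3 G x u v y} \<le> 2" (is "card ?P \<le> 2")
proof (rule ccontr)
  assume "\<not> card ?P \<le> 2"
  then obtain T where "T \<subseteq> ?P" "card T = 3"
    using obtain_subset_with_card_n[of 3 ?P] by force
  then obtain p1 p2 p3 where T: "T = {p1, p2, p3}" "distinct [p1, p2, p3]"
    by (auto simp: card_3_iff)
  obtain u1 v1 u2 v2 u3 v3 where "p1 = (u1, v1)" "p2 = (u2, v2)" "p3 = (u3, v3)"
    by (metis prod.exhaust)
  with T \<open>T \<subseteq> ?P\<close> have "distinct [(u1, v1), (u2, v2), (u3, v3)]"
    and p: "path3 G x u1 v1 y" "path3 G x u2 v2 y" "path3 G x u3 v3 y"
    by auto
  moreover have "u1 = u2 \<or> v1 = v2" "u1 = u3 \<or> v1 = v3" "u2 = u3 \<or> v2 = v3"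
    using path3_share_vertex[OF G no6 xy p(1) p(2)] path3_share_vertex[OF G no6 xy p(1) p(3)]
      path3_share_vertex[OF G no6 xy p(2) p(3)] .
  ultimately consider "u2 = u1" "u3 = u1" "distinct [v1, v2, v3]"
    | "v2 = v1" "v3 = v1" "distinct [u1, u2, u3]"
    by auto
  then show False
  proof cases
    case 1
    with p have sub: "{v1, v2, v3} \<subseteq> {v. path3 G x u1 v y}" by auto
    from 1 have "3 = card {v1, v2, v3}" by simp
    also have "\<dots> \<le> card {v. path3 G x u1 v y}"
      by (rule card_mono[OF finite_path3_fixed_first[OF G] sub])
    also have "\<dots> \<le> 2"
      by (rule card_path3_fixed_first_le[OF G xy])
    finally show False by simp
  next
    case 2
    with p have sub: "{u1, u2, u3} \<subseteq> {u. path3 G y v1 u x}"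
      by (auto simp: path3_rev[of G x])
    from 2 have "3 = card {u1, u2, u3}" by simp
    also have "\<dots> \<le> card {u. path3 G y v1 u x}"
      by (rule card_mono[OF finite_path3_fixed_first[OF G] sub])
    also have "\<dots> \<le> 2"
      by (rule card_path3_fixed_first_le[OF G CT_adj_sym[OF xy]])
    finally show False by simp
  qed
qed

lemma card_cycles4_through_edge_le:
  assumes "finite {(u, v). path3 G x u v y}"
  shows "card {H \<in> cycles_of_length E 4. {x, y} \<in> H \<and> H - {{x, y}} \<subseteq> G}
    \<le> card {(u, v). path3 G x u v y}" (is "card ?S \<le> card ?P")
proof -
  let ?cycle = "\<lambda>(u, v). {{x, y}, {x, u}, {u, v}, {v, y}}"
  have "?S \<subseteq> ?cycle ` ?P"
  proof
    fix H assume "H \<in> ?S"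
    then have "H \<in> cycles_of_length E 4" "{x, y} \<in> H" "H - {{x, y}} \<subseteq> G" by simp_all
    then obtain u v where "path3 G x u v y" "H = {{x, y}, {x, u}, {u, v}, {v, y}}"
      by (rule cycle4_through_edgeE)
    then show "H \<in> ?cycle ` ?P" by (auto intro: rev_image_eqI[of "(u, v)"])
  qed
  then have "card ?S \<le> card (?cycle ` ?P)"
    using assms by (intro card_mono) simp_all
  also have "\<dots> \<le> card ?P"
    using assms by (rule card_image_le)
  finally show ?thesis .
qed

theorem mainTheorem13:
  fixes n :: nat and G :: "(nat \<Rightarrow> nat) set set"
  assumes "n \<ge> 3"
    and "G \<subseteq> CT_edges n"
    and "cycles_of_length G 6 = {}"
  shows "\<forall>e\<in>CT_edges n.
           card {H \<in> cycles_of_length (CT_edges n) 4. e \<in> H \<and> H - {e} \<subseteq> G} \<le> 2"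
proof
  fix e assume "e \<in> CT_edges n"
  then obtain x y where e: "e = {x, y}" and xy: "CT_adj n x y"
    unfolding CT_edges_def by blast
  have "card {H \<in> cycles_of_length (CT_edges n) 4. {x, y} \<in> H \<and> H - {{x, y}} \<subseteq> G}
      \<le> card {(u, v). path3 G x u v y}"
    by (rule card_cycles4_through_edge_le[OF finite_path3[OF assms(2)]])
  also have "\<dots> \<le> 2"
    by (rule card_path3_le[OF assms(2,3) xy])
  finally show "card {H \<in> cycles_of_length (CT_edges n) 4. e \<in> H \<and> H - {e} \<subseteq> G} \<le> 2"
    unfolding e .
qed

end
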